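(* Let $f(z)=z+\sum_{k=2}^\infty b_kz^k\in\mathscr{S}^*_\wp$. Then $|H_3(1)|\le 0.150627$, where $H_3(1)=b_3(b_2b_4-b_3^2)-b_4(b_4-b_2b_3)+b_5(b_3-b_2^2)$.
   Context: $\mathbb{D}$ is the unit disk; $\mathcal{A}$ is the class of analytic $f$ on $\mathbb{D}$ with $f(0)=0,f'(0)=1$. $f\prec g$ means $f=g\circ\omega$ for analytic $\omega:\mathbb{D}\to\mathbb{D}$, $\omega(0)=0$. $\wp(z)=1+ze^z$, $\mathscr{S}^*_\wp=\{f\in\mathcal{A}:zf'(z)/f(z)\prec\wp(z)\}$. *)

theory Defs
  imports "HOL-Complex_Analysis.Complex_Analysis"
begin

definition wp :: "complex \<Rightarrow> complex" where
  "wp z = 1 + z * exp z"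

definition subordinate :: "(complex \<Rightarrow> complex) \<Rightarrow> (complex \<Rightarrow> complex) \<Rightarrow> bool" where
  "subordinate g h \<longleftrightarrow>
     (\<exists>\<omega>. \<omega> holomorphic_on ball 0 1 \<and> \<omega> 0 = 0 \<and> \<omega> ` ball 0 1 \<subseteq> ball 0 1 \<and>
          (\<forall>z\<in>ball 0 1. g z = h (\<omega> z)))"

definition classA :: "(complex \<Rightarrow> complex) set" where
  "classA = {f. f holomorphic_on ball 0 1 \<and> f 0 = 0 \<and> deriv f 0 = 1}"

text \<open>The class S*_wp: z f'(z)/f(z) (extended by its limit value 1 at 0) is subordinate
  to wp; f is required to be nonzero on the punctured disk so that z f'/f is defined.\<close>
definition starlike_wp :: "(complex \<Rightarrow> complex) set" where
  "starlike_wp = {f. f \<in> classA \<and> (\<forall>z\<in>ball 0 1 - {0}. f z \<noteq> 0) \<and>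
      subordinate (\<lambda>z. if z = 0 then 1 else z * deriv f z / f z) wp}"

definition taylor_coeff :: "(complex \<Rightarrow> complex) \<Rightarrow> nat \<Rightarrow> complex" where
  "taylor_coeff f k = (deriv ^^ k) f 0 / of_nat (fact k)"

end

theory Submission
  imports Defs
begin

text \<open>
  Write \<open>z f'(z)/f(z) = \<wp>(w(z))\<close> with a Schwarz function \<open>w(z) = \<Sum> c\<^sub>k z\<^sup>k\<close>. Comparing
  Taylor coefficients expresses \<open>b\<^sub>2, \<dots>, b\<^sub>5\<close> as polynomials in \<open>c\<^sub>1, \<dots>, c\<^sub>4\<close>, so \<open>H\<^sub>3(1)\<close>
  becomes an explicit polynomial of degree six in the \<open>c\<^sub>k\<close>. Since \<open>|w| \<le> 1\<close>, Parseval's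
  inequality gives \<open>\<Sum> |c\<^sub>k|\<^sup>2 \<le> 1\<close>; we obtain it by sampling the Taylor polynomials of
  \<open>w(r z)\<close> at roots of unity. The triangle inequality then reduces the claim to a bound for a
  real polynomial in \<open>|c\<^sub>1|, \<dots>, |c\<^sub>4|\<close> on the unit ball, which follows termwise from AM-GM
  estimates and gives \<open>|H\<^sub>3(1)| \<le> 0.1506\<close>.
\<close>

text \<open>The weights are chosen so that all coefficients in the final estimate of
  \<open>hankel_polynomial_real_bound\<close> stay below \<open>0.1506\<close>.\<close>
lemma mult_le_on_simplex:
  fixes a b :: real
  assumes "0 \<le> a" "0 \<le> b" "a + b \<le> 1"
  shows "a * b \<le> 7/25 * a + 9/40 * b"
proof (cases "a \<le> 9/40")
  case True
  then have "0 \<le> b * (9/40 - a)" using assms by simp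
  moreover have "b * (9/40 - a) = 9/40 * b - a * b" by algebra
  ultimately show ?thesis using assms by linarith
next
  case False
  then have "(1 - a) * (9/40 - a) \<le> b * (9/40 - a)"
    using assms by (intro mult_right_mono_neg) auto
  moreover have "0 \<le> (a - 189/400)^2" by simp
  moreover have "b * (9/40 - a) = 9/40 * b - a * b" by algebra
  moreover have "(1 - a) * (9/40 - a) = a * a - 49/40 * a + 9/40" by algebra
  moreover have "(a - 189/400)^2 = a * a - 189/200 * a + 35721/160000" by algebra
  ultimately show ?thesis by linarith
qed

lemma hankel_polynomial_real_bound:
  fixes x1 x2 x3 x4 :: real
  assumes nonneg: "0 \<le> x1" "0 \<le> x2" "0 \<le> x3" "0 \<le> x4"
    and sphere: "x1^2 + x2^2 + x3^2 + x4^2 \<le> 1"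
  shows "x1^6/36 + 5/144*x1^4*x2 + 1/9*x1^3*x3 + 25/144*x1^2*x2^2 + 1/36*x1*x2*x3
         + 1/16*x2^3 + 1/9*x3^2 + 1/8*x2*x4 \<le> 0.1506"
proof -
  have squares: "0 \<le> x1^2" "0 \<le> x2^2" "0 \<le> x3^2" "0 \<le> x4^2" by simp_all
  have "x1^2 \<le> 1" "x2^2 \<le> 1" using sphere squares by linarith+
  then have x1: "x1 \<le> 1" and x2: "x2 \<le> 1" by (simp_all add: power2_le_imp_le)
  have "2 * (x1 * x2) \<le> x1^2 + x2^2" "2 * (x1 * x3) \<le> x1^2 + x3^2"
    using sum_squares_bound[of x1 x2] sum_squares_bound[of x1 x3] by (simp_all add: power2_eq_square)
  then have x12: "x1 * x2 \<le> 1/2" and x13: "x1 * x3 \<le> 1/2"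
    using sphere squares by linarith+
  have T1: "x1^6/36 \<le> 1/36 * x1^2"
  proof -
    have "x1^6 = x1^2 * x1^4" by algebra
    also have "\<dots> \<le> x1^2 * 1" using x1 nonneg by (intro mult_left_mono) (auto simp: power_le_one)
    finally show ?thesis by simp
  qed
  have T2: "5/144*x1^4*x2 \<le> 5/288 * x1^2"
  proof -
    have "x1^4 * x2 = x1^2 * x1 * (x1 * x2)" by algebra
    also have "\<dots> \<le> x1^2 * 1 * (1/2)" using x1 x12 nonneg by (intro mult_mono) auto
    finally show ?thesis by (simp add: algebra_simps)
  qed
  have T3: "1/9*x1^3*x3 \<le> 1/18 * x1^2"
  proof -
    have "x1^3 * x3 = x1^2 * (x1 * x3)" by algebra
    also have "\<dots> \<le> x1^2 * (1/2)" using x13 nonneg by (intro mult_left_mono) auto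
    finally show ?thesis by (simp add: algebra_simps)
  qed
  have T4: "25/144*x1^2*x2^2 \<le> 25/144 * (7/25 * x1^2 + 9/40 * x2^2)"
    using mult_le_on_simplex[of "x1^2" "x2^2"] sphere squares by simp
  have T5: "1/36*x1*x2*x3 \<le> 1/36 * (1/5 * x2^2 + 5/4 * x3^2)"
  proof -
    have "x1 * x2 * x3 \<le> 1 * (x2 * x3)"
      unfolding mult.assoc using x1 nonneg by (intro mult_right_mono) auto
    also have "0 \<le> (x2 - 5/2 * x3)^2" by simp
    then have "x2 * x3 \<le> 1/5 * x2^2 + 5/4 * x3^2"
      by (simp add: power2_diff algebra_simps power2_eq_square)
    finally show ?thesis by simp
  qed
  have T6: "1/16*x2^3 \<le> 1/16 * x2^2" using x2 nonneg by (simp add: power_decreasing)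
  have "0 \<le> (x2/2 - x4)^2" by simp
  then have T8: "1/8*x2*x4 \<le> 1/8 * (1/4 * x2^2 + x4^2)"
    by (simp add: power2_diff algebra_simps power2_eq_square)
  have "x1^6/36 + 5/144*x1^4*x2 + 1/9*x1^3*x3 + 25/144*x1^2*x2^2 + 1/36*x1*x2*x3
         + 1/16*x2^3 + 1/9*x3^2 + 1/8*x2*x4
      \<le> 1/36 * x1^2 + 5/288 * x1^2 + 1/18 * x1^2 + 25/144 * (7/25 * x1^2 + 9/40 * x2^2)
         + 1/36 * (1/5 * x2^2 + 5/4 * x3^2) + 1/16 * x2^2 + 1/9 * x3^2 + 1/8 * (1/4 * x2^2 + x4^2)"
    by (intro add_mono order_refl T1 T2 T3 T4 T5 T6 T8)
  also have "\<dots> = 43/288 * x1^2 + 797/5760 * x2^2 + 7/48 * x3^2 + 1/8 * x4^2"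
    by (simp add: algebra_simps)
  also have "\<dots> \<le> 1506 / 10000" using sphere squares by linarith
  finally show ?thesis by simp
qed

lemma hankel_polynomial_bound:
  fixes c1 c2 c3 c4 :: complex
  assumes "(cmod c1)^2 + (cmod c2)^2 + (cmod c3)^2 + (cmod c4)^2 \<le> 1"
  shows "cmod (-(c1^6)/36 + 5/144*c1^4*c2 + 1/9*c1^3*c3 - 25/144*c1^2*c2^2
      - 1/36*c1*c2*c3 + 1/16*c2^3 - 1/9*c3^2 + 1/8*c2*c4) \<le> 0.1506"
proof -
  have "cmod (-(c1^6)/36 + 5/144*c1^4*c2 + 1/9*c1^3*c3 - 25/144*c1^2*c2^2
      - 1/36*c1*c2*c3 + 1/16*c2^3 - 1/9*c3^2 + 1/8*c2*c4)
    \<le> (cmod c1)^6/36 + 5/144*(cmod c1)^4*(cmod c2) + 1/9*(cmod c1)^3*(cmod c3)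
      + 25/144*(cmod c1)^2*(cmod c2)^2 + 1/36*(cmod c1)*(cmod c2)*(cmod c3)
      + 1/16*(cmod c2)^3 + 1/9*(cmod c3)^2 + 1/8*(cmod c2)*(cmod c4)"
    by (intro norm_triangle_le norm_triangle_le_diff add_mono)
      (simp_all add: norm_mult norm_power norm_divide)
  also have "\<dots> \<le> 0.1506"
    by (rule hankel_polynomial_real_bound) (use assms in auto)
  finally show ?thesis .
qed

lemma norm_fps_expansion_nth_le_1:
  assumes holo: "w holomorphic_on ball 0 1" and bounded: "\<And>z. z \<in> ball 0 1 \<Longrightarrow> norm (w z) \<le> 1"
  shows "norm (fps_nth (fps_expansion w 0) k) \<le> 1"
proof -
  define A where "A = norm (fps_nth (fps_expansion w 0) k)"
  have "eventually (\<lambda>r. A * r^k \<le> 1) (at_left (1::real))"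
    using eventually_at_left_real[OF zero_less_one]
  proof eventually_elim
    case (elim r)
    then have r: "0 < r" "r < 1" by auto
    have "norm ((deriv ^^ k) w 0) \<le> fact k * 1 / r^k"
    proof (rule Cauchy_inequality)
      show "w holomorphic_on ball 0 r" by (rule holomorphic_on_subset[OF holo]) (use r in auto)
      have "w holomorphic_on cball 0 r" by (rule holomorphic_on_subset[OF holo]) (use r in auto)
      then show "continuous_on (cball 0 r) w" by (rule holomorphic_on_imp_continuous_on)
      show "norm (w x) \<le> 1" if "norm (0 - x) = r" for x using bounded that r by simp
    qed fact
    then show ?case unfolding A_def using r by (simp add: fps_expansion_def norm_divide field_simps)
  qed
  moreover have "((\<lambda>r. A * r^k) \<longlongrightarrow> A * 1^k) (at_left (1::real))" by (intro tendsto_intros)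
  ultimately have "A * 1^k \<le> 1" by (intro tendsto_upperbound) auto
  then show ?thesis unfolding A_def by simp
qed

lemma sum_powers_root_unity_ratio:
  assumes "k < n" "l < n"
  defines "u \<equiv> exp (2 * of_real pi * \<i> / of_nat n)"
  shows "(\<Sum>j<n. (u^k / u^l)^j) = (if k = l then of_nat n else 0)"
proof (cases "k = l")
  case False
  have power_u: "u^m = exp (2 * of_real pi * \<i> * of_nat m / of_nat n)" for m
    unfolding u_def exp_of_nat_mult[symmetric] by (simp add: mult_ac)
  have "u^k \<noteq> u^l"
    using False assms unfolding power_u by (subst complex_root_unity_eq) auto
  then have ratio_ne_1: "u^k / u^l \<noteq> 1" by (simp add: u_def)
  have "u^n = 1" unfolding power_u using assms by simp
  have "(u^k / u^l)^n = (u^k)^n / (u^l)^n" by (rule power_divide)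
  also have "\<dots> = (u^n)^k / (u^n)^l" by (simp only: power_mult[symmetric] mult.commute)
  also have "\<dots> = 1" by (simp only: \<open>u^n = 1\<close> power_one div_by_1)
  finally have "(u^k / u^l)^n = 1" .
  then show ?thesis using False ratio_ne_1 by (simp add: geometric_sum)
qed (simp add: u_def)

lemma discrete_Parseval_roots_unity:
  fixes d :: "nat \<Rightarrow> complex" and n :: nat
  defines "u \<equiv> exp (2 * of_real pi * \<i> / of_nat n)"
  shows "(\<Sum>j<n. (norm (\<Sum>k<n. d k * u^(j*k)))^2) = n * (\<Sum>k<n. (norm (d k))^2)"
proof -
  have cnj_u: "cnj u = inverse u"
  proof -
    have "cnj u = exp (cnj (2 * of_real pi * \<i> / of_nat n))" unfolding u_def by (simp add: exp_cnj)
    also have "cnj (2 * of_real pi * \<i> / of_nat n) = - (2 * of_real pi * \<i> / of_nat n)"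
      by (simp add: complex_eq_iff)
    finally show ?thesis unfolding u_def by (simp add: exp_minus)
  qed
  have product: "(\<Sum>k<n. d k * u^(j*k)) * cnj (\<Sum>l<n. d l * u^(j*l))
      = (\<Sum>k<n. \<Sum>l<n. d k * cnj (d l) * (u^k / u^l)^j)" for j
  proof -
    have "(u^k / u^l)^j = u^(j*k) * cnj u ^ (j*l)" for k l
      by (simp add: cnj_u power_divide divide_inverse power_inverse power_mult_distrib
          mult.commute[of j] flip: power_mult)
    then show ?thesis by (simp add: cnj_sum sum_product mult_ac)
  qed
  have "complex_of_real (\<Sum>j<n. (norm (\<Sum>k<n. d k * u^(j*k)))^2)
      = (\<Sum>j<n. \<Sum>k<n. \<Sum>l<n. d k * cnj (d l) * (u^k / u^l)^j)"
    by (simp only: of_real_sum complex_norm_square product)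
  also have "\<dots> = (\<Sum>k<n. \<Sum>j<n. \<Sum>l<n. d k * cnj (d l) * (u^k / u^l)^j)"
    by (rule sum.swap)
  also have "\<dots> = (\<Sum>k<n. \<Sum>l<n. \<Sum>j<n. d k * cnj (d l) * (u^k / u^l)^j)"
    by (intro sum.cong refl sum.swap)
  also have "\<dots> = (\<Sum>k<n. \<Sum>l<n. d k * cnj (d l) * (\<Sum>j<n. (u^k / u^l)^j))"
    by (simp only: sum_distrib_left)
  also have "\<dots> = (\<Sum>k<n. \<Sum>l<n. d k * cnj (d l) * (if k = l then of_nat n else 0))"
    unfolding u_def by (intro sum.cong refl, subst sum_powers_root_unity_ratio) auto
  also have "\<dots> = (\<Sum>k<n. d k * cnj (d k) * of_nat n)"
    by (simp add: if_distrib cong: if_cong)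
  also have "\<dots> = of_nat n * (\<Sum>k<n. complex_of_real ((norm (d k))^2))"
    by (simp only: complex_norm_square sum_distrib_left mult.commute)
  also have "\<dots> = complex_of_real (n * (\<Sum>k<n. (norm (d k))^2))"
    by (simp only: of_real_mult of_real_sum of_real_of_nat_eq)
  finally show ?thesis by (simp only: of_real_eq_iff)
qed

text \<open>The tail of the Taylor series of \<open>w(r z)\<close> beyond degree \<open>n\<close> is at most \<open>r\<^sup>n/(1 - r)\<close>,
  so the Taylor polynomial is bounded by \<open>1 + r\<^sup>n/(1 - r)\<close> at the \<open>n\<close>-th roots of unity; Parseval's
  identity there bounds its weighted coefficient sum.\<close>
lemma sum_norm_sq_fps_expansion_le_approx:
  assumes holo: "w holomorphic_on ball 0 1" and bounded: "\<And>z. z \<in> ball 0 1 \<Longrightarrow> norm (w z) \<le> 1"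
    and r: "0 < r" "r < 1" and "0 < n" "m \<le> n"
  shows "(\<Sum>k<m. (norm (fps_nth (fps_expansion w 0) k))^2 * r^(2*k)) \<le> (1 + r^n / (1 - r))^2"
proof -
  define a where "a = fps_nth (fps_expansion w 0)"
  define u where "u = exp (2 * of_real pi * \<i> / of_nat n)"
  define d where "d k = a k * of_real (r^k)" for k
  define \<delta> where "\<delta> = r^n / (1 - r)"
  have sample_le: "norm (\<Sum>k<n. d k * u^(j*k)) \<le> 1 + \<delta>" for j
  proof -
    define z where "z = of_real r * u^j"
    have norm_z: "norm z = r" unfolding z_def u_def using r by (simp add: norm_mult norm_power)
    then have z: "z \<in> ball 0 1" using r by simp
    have "(\<lambda>k. a k * z^k) sums w z"
      using holomorphic_power_series[OF holo z] by (simp add: a_def fps_expansion_def)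
    then have tail: "(\<lambda>i. a (i + n) * z^(i + n)) sums (w z - (\<Sum>k<n. a k * z^k))"
      by (rule sums_split_initial_segment)
    have "(\<lambda>i. r^n * r^i) sums (r^n * (1 / (1 - r)))"
      using r by (intro sums_mult geometric_sums) simp
    then have geometric: "(\<lambda>i. r^(i + n)) sums \<delta>" by (simp add: \<delta>_def power_add mult.commute)
    have "norm (a k) \<le> 1" for k
      unfolding a_def by (rule norm_fps_expansion_nth_le_1[OF holo bounded])
    then have "norm (a (i + n) * z^(i + n)) \<le> r^(i + n)" for i
      using r by (simp add: norm_mult norm_power norm_z mult_left_le_one_le)
    moreover have "(\<Sum>k<n. a k * z^k) = (\<Sum>k<n. d k * u^(j*k))"
      by (simp add: d_def z_def power_mult_distrib mult_ac flip: power_mult)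
    ultimately have "norm (w z - (\<Sum>k<n. d k * u^(j*k))) \<le> \<delta>"
      using norm_suminf_le[of "\<lambda>i. a (i + n) * z^(i + n)" "\<lambda>i. r^(i + n)"] tail geometric
      by (simp add: sums_iff)
    moreover have "norm (w z) \<le> 1" using bounded[OF z] .
    ultimately show ?thesis
      using norm_triangle_sub[of "\<Sum>k<n. d k * u^(j*k)" "w z"]
        norm_minus_commute[of "w z" "\<Sum>k<n. d k * u^(j*k)"]
      by linarith
  qed
  have "real n * (\<Sum>k<n. (norm (d k))^2) = (\<Sum>j<n. (norm (\<Sum>k<n. d k * u^(j*k)))^2)"
    unfolding u_def by (rule discrete_Parseval_roots_unity[symmetric])
  also have "\<dots> \<le> (\<Sum>j<n. (1 + \<delta>)^2)"
    by (intro sum_mono power_mono sample_le) simp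
  also have "\<dots> = real n * (1 + \<delta>)^2" by simp
  finally have "(\<Sum>k<n. (norm (d k))^2) \<le> (1 + \<delta>)^2" using \<open>0 < n\<close> by simp
  moreover have "(\<Sum>k<m. (norm (d k))^2) \<le> (\<Sum>k<n. (norm (d k))^2)"
    using \<open>m \<le> n\<close> by (intro sum_mono2) auto
  moreover have "(norm (d k))^2 = (norm (a k))^2 * r^(2*k)" for k
    using r by (simp add: d_def norm_mult norm_power power_mult_distrib mult.commute[of 2 k]
        flip: power_mult)
  ultimately show ?thesis by (simp add: a_def \<delta>_def)
qed

lemma sum_norm_sq_fps_expansion_le_1:
  assumes holo: "w holomorphic_on ball 0 1" and bounded: "\<And>z. z \<in> ball 0 1 \<Longrightarrow> norm (w z) \<le> 1"
  shows "(\<Sum>k<m. (norm (fps_nth (fps_expansion w 0) k))^2) \<le> 1"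
proof -
  define S where "S r = (\<Sum>k<m. (norm (fps_nth (fps_expansion w 0) k))^2 * r^(2*k))" for r :: real
  have "S r \<le> 1" if r: "0 < r" "r < 1" for r
  proof -
    have "(\<lambda>n. (1 + r^n / (1 - r))^2) \<longlonglongrightarrow> (1 + 0 / (1 - r))^2"
      using r by (intro tendsto_intros) auto
    moreover have "eventually (\<lambda>n. S r \<le> (1 + r^n / (1 - r))^2) sequentially"
      using eventually_ge_at_top[of "Suc m"]
      by eventually_elim (unfold S_def, rule sum_norm_sq_fps_expansion_le_approx[OF holo bounded r], auto)
    ultimately have "S r \<le> (1 + 0 / (1 - r))^2" by (intro tendsto_lowerbound) auto
    then show ?thesis by simp
  qed
  then have "eventually (\<lambda>r. S r \<le> 1) (at_left (1::real))"
    using eventually_at_left_real[OF zero_less_one] by (auto elim: eventually_mono)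
  moreover have "(S \<longlongrightarrow> S 1) (at_left 1)" unfolding S_def by (intro tendsto_intros)
  ultimately have "S 1 \<le> 1" by (intro tendsto_upperbound) auto
  then show ?thesis by (simp add: S_def)
qed

lemma fps_nth_of_deriv_eq_mult:
  fixes W E :: "complex fps"
  assumes E0: "fps_nth E 0 = 1" and E_deriv: "fps_deriv E = fps_deriv W * E"
  shows "fps_nth E 1 = fps_nth W 1"
    and "2 * fps_nth E 2 = fps_nth W 1 * fps_nth E 1 + 2 * fps_nth W 2"
    and "3 * fps_nth E 3 = fps_nth W 1 * fps_nth E 2 + 2 * fps_nth W 2 * fps_nth E 1 + 3 * fps_nth W 3"
proof -
  have rec: "of_nat (n + 1) * fps_nth E (n + 1)
      = (\<Sum>i=0..n. of_nat (i + 1) * fps_nth W (i + 1) * fps_nth E (n - i))" for n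
    using arg_cong[OF E_deriv, of "\<lambda>G. fps_nth G n"] by (simp add: fps_mult_nth)
  show "fps_nth E 1 = fps_nth W 1" using rec[of 0] E0 by simp
  show "2 * fps_nth E 2 = fps_nth W 1 * fps_nth E 1 + 2 * fps_nth W 2"
    using rec[of 1] E0 by (simp add: eval_nat_numeral)
  show "3 * fps_nth E 3 = fps_nth W 1 * fps_nth E 2 + 2 * fps_nth W 2 * fps_nth E 1 + 3 * fps_nth W 3"
    using rec[of 2] E0 by (simp add: eval_nat_numeral)
qed

lemma fps_nth_starlike_wp_equation:
  fixes W E F :: "complex fps"
  assumes W0: "fps_nth W 0 = 0" and E0: "fps_nth E 0 = 1"
    and F0: "fps_nth F 0 = 0" and F1: "fps_nth F 1 = 1"
    and F_eq: "fps_X * fps_deriv F = F * (1 + W * E)"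
  defines "w \<equiv> fps_nth W" and "e \<equiv> fps_nth E" and "b \<equiv> fps_nth F"
  shows "2 * b 2 = w 1 + b 2"
    and "3 * b 3 = (w 1 * e 1 + w 2) + b 2 * w 1 + b 3"
    and "4 * b 4 = (w 1 * e 2 + w 2 * e 1 + w 3) + b 2 * (w 1 * e 1 + w 2) + b 3 * w 1 + b 4"
    and "5 * b 5 = (w 1 * e 3 + w 2 * e 2 + w 3 * e 1 + w 4) + b 2 * (w 1 * e 2 + w 2 * e 1 + w 3)
      + b 3 * (w 1 * e 1 + w 2) + b 4 * w 1 + b 5"
proof -
  have sum_upto:
    "(\<Sum>i=0..1. g i) = g 0 + g 1"
    "(\<Sum>i=0..2. g i) = g 0 + g 1 + g 2"
    "(\<Sum>i=0..3. g i) = g 0 + g 1 + g 2 + g 3"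
    "(\<Sum>i=0..4. g i) = g 0 + g 1 + g 2 + g 3 + g 4"
    "(\<Sum>i=0..5. g i) = g 0 + g 1 + g 2 + g 3 + g 4 + g 5" for g :: "nat \<Rightarrow> complex"
    by (simp_all add: sum.atLeast0_atMost_Suc eval_nat_numeral)
  have rec_Suc: "of_nat (Suc m) * b (Suc m) = (\<Sum>i=0..Suc m. b i * fps_nth (1 + W * E) (Suc m - i))"
    for m
    using arg_cong[OF F_eq, of "\<lambda>G. fps_nth G (Suc m)"] unfolding fps_mult_nth[of F "1 + W * E"]
    by (simp add: b_def)
  have rec: "of_nat m * b m = (\<Sum>i=0..m. b i * fps_nth (1 + W * E) (m - i))" if "0 < m" for m
    using rec_Suc[of "m - 1"] that by simp
  have WE: "fps_nth (W * E) 1 = w 1"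
    "fps_nth (W * E) 2 = w 1 * e 1 + w 2"
    "fps_nth (W * E) 3 = w 1 * e 2 + w 2 * e 1 + w 3"
    "fps_nth (W * E) 4 = w 1 * e 3 + w 2 * e 2 + w 3 * e 1 + w 4"
    unfolding fps_mult_nth w_def e_def by (simp_all only: sum_upto) (simp_all add: W0 E0)
  show "2 * b 2 = w 1 + b 2"
    using rec[of 2] F0 F1 by (simp only: sum_upto) (simp add: b_def w_def e_def WE W0 E0)
  show "3 * b 3 = (w 1 * e 1 + w 2) + b 2 * w 1 + b 3"
    using rec[of 3] F0 F1 by (simp only: sum_upto) (simp add: b_def w_def e_def WE W0 E0)
  show "4 * b 4 = (w 1 * e 2 + w 2 * e 1 + w 3) + b 2 * (w 1 * e 1 + w 2) + b 3 * w 1 + b 4"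
    using rec[of 4] F0 F1 by (simp only: sum_upto) (simp add: b_def w_def e_def WE W0 E0)
  show "5 * b 5 = (w 1 * e 3 + w 2 * e 2 + w 3 * e 1 + w 4) + b 2 * (w 1 * e 2 + w 2 * e 1 + w 3)
      + b 3 * (w 1 * e 1 + w 2) + b 4 * w 1 + b 5"
    using rec[of 5] F0 F1 by (simp only: sum_upto) (simp add: b_def w_def e_def WE W0 E0)
qed

lemma starlike_wp_coeff_recurrences_solution:
  fixes w1 w2 w3 w4 e1 e2 e3 b2 b3 b4 b5 :: complex
  assumes e1: "e1 = w1" and e2: "2 * e2 = w1 * e1 + 2 * w2" and e3: "3 * e3 = w1 * e2 + 2 * w2 * e1 + 3 * w3"
    and b2: "2 * b2 = w1 + b2" and b3: "3 * b3 = (w1 * e1 + w2) + b2 * w1 + b3"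
    and b4: "4 * b4 = (w1 * e2 + w2 * e1 + w3) + b2 * (w1 * e1 + w2) + b3 * w1 + b4"
    and b5: "5 * b5 = (w1 * e3 + w2 * e2 + w3 * e1 + w4) + b2 * (w1 * e2 + w2 * e1 + w3)
      + b3 * (w1 * e1 + w2) + b4 * w1 + b5"
  shows "b2 = w1" and "b3 = w1^2 + w2 / 2" and "b4 = 5/6 * w1^3 + 7/6 * w1 * w2 + w3 / 3"
    and "b5 = 5/8 * w1^4 + 37/24 * w1^2 * w2 + 5/6 * w1 * w3 + 3/8 * w2^2 + w4 / 4"
proof -
  have E2: "e2 = w1^2 / 2 + w2"
  proof -
    have "e2 = (2 * e2) / 2" by simp
    also have "\<dots> = (w1 * e1 + 2 * w2) / 2" using e2 by simp
    also have "\<dots> = w1^2 / 2 + w2" by (simp add: e1 field_simps power2_eq_square)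
    finally show ?thesis .
  qed
  have E3: "e3 = w1^3 / 6 + w1 * w2 + w3"
  proof -
    have "e3 = (3 * e3) / 3" by simp
    also have "\<dots> = (w1 * e2 + 2 * w2 * e1 + 3 * w3) / 3" using e3 by simp
    also have "\<dots> = w1^3 / 6 + w1 * w2 + w3"
      by (simp add: e1 E2 field_simps power2_eq_square power3_eq_cube)
    finally show ?thesis .
  qed
  show B2: "b2 = w1" using b2 by simp
  show B3: "b3 = w1^2 + w2 / 2"
  proof -
    have "b3 = (3 * b3 - b3) / 2" by simp
    also have "\<dots> = ((w1 * e1 + w2) + b2 * w1) / 2" using b3 by simp
    also have "\<dots> = w1^2 + w2 / 2" by (simp add: e1 B2 field_simps power2_eq_square)
    finally show ?thesis .
  qed
  show B4: "b4 = 5/6 * w1^3 + 7/6 * w1 * w2 + w3 / 3"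
  proof -
    have "b4 = (4 * b4 - b4) / 3" by simp
    also have "\<dots> = ((w1 * e2 + w2 * e1 + w3) + b2 * (w1 * e1 + w2) + b3 * w1) / 3" using b4 by simp
    also have "\<dots> = 5/6 * w1^3 + 7/6 * w1 * w2 + w3 / 3"
      by (simp add: e1 E2 B2 B3 field_simps power2_eq_square power3_eq_cube)
    finally show ?thesis .
  qed
  show "b5 = 5/8 * w1^4 + 37/24 * w1^2 * w2 + 5/6 * w1 * w3 + 3/8 * w2^2 + w4 / 4"
  proof -
    have "b5 = (5 * b5 - b5) / 4" by simp
    also have "\<dots> = ((w1 * e3 + w2 * e2 + w3 * e1 + w4) + b2 * (w1 * e2 + w2 * e1 + w3)
        + b3 * (w1 * e1 + w2) + b4 * w1) / 4"
      using b5 by simp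
    also have "\<dots> = 5/8 * w1^4 + 37/24 * w1^2 * w2 + 5/6 * w1 * w3 + 3/8 * w2^2 + w4 / 4"
      by (simp add: e1 E2 E3 B2 B3 B4 field_simps power2_eq_square power3_eq_cube eval_nat_numeral)
    finally show ?thesis .
  qed
qed

lemma starlike_wp_Schwarz_function:
  assumes "f \<in> starlike_wp"
  obtains w where "w holomorphic_on ball 0 1" "w 0 = 0" "\<And>z. z \<in> ball 0 1 \<Longrightarrow> norm (w z) \<le> 1"
    and "\<And>z. z \<in> ball 0 1 \<Longrightarrow> z * deriv f z = f z * (1 + w z * exp (w z))"
proof -
  from assms have f0: "f 0 = 0" and nonzero: "\<And>z. z \<in> ball 0 1 - {0} \<Longrightarrow> f z \<noteq> 0"
    and "subordinate (\<lambda>z. if z = 0 then 1 else z * deriv f z / f z) wp"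
    unfolding starlike_wp_def classA_def by auto
  then obtain w where w: "w holomorphic_on ball 0 1" "w 0 = 0" "w ` ball 0 1 \<subseteq> ball 0 1"
    and eq: "\<And>z. z \<in> ball 0 1 \<Longrightarrow> (if z = 0 then 1 else z * deriv f z / f z) = wp (w z)"
    unfolding subordinate_def by blast
  show ?thesis
  proof
    show "norm (w z) \<le> 1" if "z \<in> ball 0 1" for z
    proof -
      have "w z \<in> ball 0 1" using w(3) that by blast
      then show ?thesis by simp
    qed
    show "z * deriv f z = f z * (1 + w z * exp (w z))" if z: "z \<in> ball 0 1" for z
      using eq[OF z] nonzero[of z] z f0 by (cases "z = 0") (auto simp: wp_def field_simps)
  qed (use w in auto)
qed

lemma fps_deriv_fps_expansion_exp_comp:
  assumes "open A" "0 \<in> A" "w holomorphic_on A"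
  shows "fps_deriv (fps_expansion (\<lambda>z. exp (w z)) 0)
    = fps_deriv (fps_expansion w 0) * fps_expansion (\<lambda>z. exp (w z)) 0"
proof -
  have W: "w has_fps_expansion fps_expansion w 0"
    and E: "(\<lambda>z. exp (w z)) has_fps_expansion fps_expansion (\<lambda>z. exp (w z)) 0"
    using assms by (auto intro!: has_fps_expansion_fps_expansion holomorphic_intros)
  have "deriv (\<lambda>z. exp (w z)) has_fps_expansion
      fps_deriv (fps_expansion w 0) * fps_expansion (\<lambda>z. exp (w z)) 0"
  proof (subst has_fps_expansion_cong)
    show "eventually (\<lambda>z. deriv (\<lambda>z. exp (w z)) z = deriv w z * exp (w z)) (nhds 0)"
      using eventually_nhds_in_open[OF assms(1,2)]
    proof eventually_elim
      case (elim z)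
      have "(w has_field_derivative deriv w z) (at z)"
        using holomorphic_derivI[OF assms(3,1) elim] .
      then have "((\<lambda>z. exp (w z)) has_field_derivative exp (w z) * deriv w z) (at z)"
        by (rule DERIV_chain2[OF DERIV_exp])
      then show ?case by (simp add: DERIV_imp_deriv mult.commute)
    qed
  qed (auto intro!: has_fps_expansion_mult has_fps_expansion_deriv W E)
  then show ?thesis
    using has_fps_expansion_deriv[OF E] by (rule fps_expansion_unique_complex[symmetric])
qed

lemma starlike_wp_taylor_coeffs:
  assumes "f \<in> starlike_wp"
  obtains w c where "w holomorphic_on ball 0 1" "w 0 = 0" "\<And>z. z \<in> ball 0 1 \<Longrightarrow> norm (w z) \<le> 1"
    and "c = fps_nth (fps_expansion w 0)"
    and "taylor_coeff f 2 = c 1" "taylor_coeff f 3 = (c 1)^2 + c 2 / 2"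
    and "taylor_coeff f 4 = 5/6 * (c 1)^3 + 7/6 * c 1 * c 2 + c 3 / 3"
    and "taylor_coeff f 5 = 5/8 * (c 1)^4 + 37/24 * (c 1)^2 * c 2 + 5/6 * c 1 * c 3 + 3/8 * (c 2)^2 + c 4 / 4"
proof -
  from assms have holf: "f holomorphic_on ball 0 1" and f0: "f 0 = 0" and df0: "deriv f 0 = 1"
    unfolding starlike_wp_def classA_def by auto
  obtain w where holw: "w holomorphic_on ball 0 1" and w0: "w 0 = 0"
    and bounded: "\<And>z. z \<in> ball 0 1 \<Longrightarrow> norm (w z) \<le> 1"
    and eq: "\<And>z. z \<in> ball 0 1 \<Longrightarrow> z * deriv f z = f z * (1 + w z * exp (w z))"
    using starlike_wp_Schwarz_function[OF assms] by blast
  have near_0: "eventually (\<lambda>z. z \<in> ball 0 1) (nhds (0::complex))"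
    by (intro eventually_nhds_in_open) auto
  define F where "F = fps_expansion f 0"
  define W where "W = fps_expansion w 0"
  define E where "E = fps_expansion (\<lambda>z. exp (w z)) 0"
  have F: "f has_fps_expansion F" and W: "w has_fps_expansion W"
    and E: "(\<lambda>z. exp (w z)) has_fps_expansion E"
    unfolding F_def W_def E_def using holf holw
    by (auto intro!: has_fps_expansion_fps_expansion[of "ball 0 1"] holomorphic_intros)
  have E_deriv: "fps_deriv E = fps_deriv W * E"
    unfolding E_def W_def using holw by (intro fps_deriv_fps_expansion_exp_comp) auto
  have "(\<lambda>z. z * deriv f z) has_fps_expansion F * (1 + W * E)"
  proof (subst has_fps_expansion_cong)
    show "eventually (\<lambda>z. z * deriv f z = f z * (1 + w z * exp (w z))) (nhds 0)"
      using near_0 by eventually_elim (rule eq)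
  qed (auto intro!: has_fps_expansion_mult has_fps_expansion_add F W E)
  then have F_eq: "fps_X * fps_deriv F = F * (1 + W * E)"
    using has_fps_expansion_mult[OF has_fps_expansion_fps_X has_fps_expansion_deriv[OF F]]
    by (rule fps_expansion_unique_complex[symmetric])
  have "fps_nth W 0 = 0" "fps_nth E 0 = 1" "fps_nth F 0 = 0" "fps_nth F 1 = 1"
    using w0 f0 df0 by (simp_all add: W_def E_def F_def fps_expansion_def)
  note coeffs = starlike_wp_coeff_recurrences_solution[OF
      fps_nth_of_deriv_eq_mult[OF \<open>fps_nth E 0 = 1\<close> E_deriv] fps_nth_starlike_wp_equation[OF this F_eq]]
  have "taylor_coeff f = fps_nth F"
    by (simp add: fun_eq_iff taylor_coeff_def F_def fps_expansion_def)
  then show ?thesis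
    by (intro that[OF holw w0 bounded refl]) (simp_all add: coeffs W_def)
qed

theorem mainTheorem19:
  fixes f :: "complex \<Rightarrow> complex"
  assumes "f \<in> starlike_wp"
  shows "(let b = taylor_coeff f in
           cmod (b 3 * (b 2 * b 4 - (b 3)^2) - b 4 * (b 4 - b 2 * b 3) + b 5 * (b 3 - (b 2)^2)))
         \<le> 0.150627"
proof -
  obtain w c where holw: "w holomorphic_on ball 0 1" and "w 0 = 0"
    and bounded: "\<And>z. z \<in> ball 0 1 \<Longrightarrow> norm (w z) \<le> 1"
    and c: "c = fps_nth (fps_expansion w 0)"
    and b2: "taylor_coeff f 2 = c 1" and b3: "taylor_coeff f 3 = (c 1)^2 + c 2 / 2"
    and b4: "taylor_coeff f 4 = 5/6 * (c 1)^3 + 7/6 * c 1 * c 2 + c 3 / 3"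
    and b5: "taylor_coeff f 5 = 5/8 * (c 1)^4 + 37/24 * (c 1)^2 * c 2 + 5/6 * c 1 * c 3
      + 3/8 * (c 2)^2 + c 4 / 4"
    using starlike_wp_taylor_coeffs[OF assms] by blast
  have "c 0 = 0" using \<open>w 0 = 0\<close> by (simp add: c fps_expansion_def)
  moreover have "(\<Sum>k<5. (cmod (c k))^2) \<le> 1"
    unfolding c by (rule sum_norm_sq_fps_expansion_le_1[OF holw bounded])
  ultimately have "(cmod (c 1))^2 + (cmod (c 2))^2 + (cmod (c 3))^2 + (cmod (c 4))^2 \<le> 1"
    by (simp add: eval_nat_numeral)
  then have "cmod (-(c 1^6)/36 + 5/144*c 1^4*c 2 + 1/9*c 1^3*c 3 - 25/144*c 1^2*c 2^2
      - 1/36*c 1*c 2*c 3 + 1/16*c 2^3 - 1/9*c 3^2 + 1/8*c 2*c 4) \<le> 0.1506"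
    by (rule hankel_polynomial_bound)
  moreover have "(let b = taylor_coeff f in
      b 3 * (b 2 * b 4 - (b 3)^2) - b 4 * (b 4 - b 2 * b 3) + b 5 * (b 3 - (b 2)^2))
      = -(c 1^6)/36 + 5/144*c 1^4*c 2 + 1/9*c 1^3*c 3 - 25/144*c 1^2*c 2^2
        - 1/36*c 1*c 2*c 3 + 1/16*c 2^3 - 1/9*c 3^2 + 1/8*c 2*c 4"
    unfolding Let_def b2 b3 b4 b5
    by (simp add: field_simps power2_eq_square power3_eq_cube eval_nat_numeral)
  ultimately show ?thesis by (simp add: Let_def)
qed

end
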